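(* For every $n\ge0$, the number $e_n$ of Dyck paths with catastrophes of length $n$ equals the number $h_n$ of $1$-horizontal Dyck paths of length $n$.
   Context: A Dyck path with catastrophes of length $n$ is a sequence of $n$ steps starting and ending at altitude $0$ and never going below altitude $0$, where each step is either an up step $(1,1)$, a down step $(1,-1)$, or a catastrophe, i.e. a step from an altitude $h>1$ directly to altitude $0$. A $1$-horizontal Dyck path of length $n$ is a sequence of $n$ steps starting and ending at altitude $0$ and never going below altitude $0$, where each step is an up step $(1,1)$, a down step $(1,-1)$, or a horizontal step $(1,0)$, horizontal steps being allowed only at altitude $1$. *)

theory Defs
  imports Main
begin

text \<open>Steps of lattice paths: up (1,1), down (1,-1), horizontal (1,0),
  and catastrophe (a jump from the current altitude directly to 0).\<close>
datatype step = U | D | H | C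

fun cat_valid :: "nat \<Rightarrow> step list \<Rightarrow> bool" where
  "cat_valid h [] = (h = 0)"
| "cat_valid h (U # s) = cat_valid (Suc h) s"
| "cat_valid h (D # s) = (h > 0 \<and> cat_valid (h - 1) s)"
| "cat_valid h (C # s) = (h > 1 \<and> cat_valid 0 s)"
| "cat_valid h (H # s) = False"

fun hor_valid :: "nat \<Rightarrow> step list \<Rightarrow> bool" where
  "hor_valid h [] = (h = 0)"
| "hor_valid h (U # s) = hor_valid (Suc h) s"
| "hor_valid h (D # s) = (h > 0 \<and> hor_valid (h - 1) s)"
| "hor_valid h (H # s) = (h = 1 \<and> hor_valid h s)"
| "hor_valid h (C # s) = False"

definition dyck_cat_paths :: "nat \<Rightarrow> step list set" where
  "dyck_cat_paths n = {s. length s = n \<and> cat_valid 0 s}"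

definition hor1_dyck_paths :: "nat \<Rightarrow> step list set" where
  "hor1_dyck_paths n = {s. length s = n \<and> hor_valid 0 s}"

definition e :: "nat \<Rightarrow> nat" where "e n = card (dyck_cat_paths n)"
definition h :: "nat \<Rightarrow> nat" where "h n = card (hor1_dyck_paths n)"

end

theory Submission
  imports Defs
begin

text \<open>Count paths by their starting altitude. Conditioning on the first step gives linear
  recurrences for both kinds of paths, and an induction on the length shows that the
  catastrophe paths from altitude \<open>c \<ge> 1\<close> are equinumerous with the 1-horizontal paths
  starting at any of the altitudes \<open>1, \<dots>, c\<close>; at altitude 0 the two counts agree.
  (Bijectively, a catastrophe from altitude \<open>c\<close> is undone by flattening the last up steps
  leaving the levels \<open>1, \<dots>, c - 1\<close>.)\<close>

lemma UNIV_step: "(UNIV :: step set) = {U, D, H, C}"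
  using step.exhaust by auto

instance step :: finite
  by standard (simp add: UNIV_step)

lemma card_lists_length_Suc:
  fixes P :: "'a::finite list \<Rightarrow> bool"
  shows "card {xs. length xs = Suc n \<and> P xs} = (\<Sum>x\<in>UNIV. card {xs. length xs = n \<and> P (x # xs)})"
proof -
  let ?A = "\<lambda>x. {xs. length xs = n \<and> P (x # xs)}"
  have fin: "finite (?A x)" for x
    using finite_lists_length_eq[OF finite_UNIV, of n] by (rule rev_finite_subset) auto
  have "{xs. length xs = Suc n \<and> P xs} = (\<Union>x. (#) x ` ?A x)"
    by (auto simp: length_Suc_conv)
  also have "card \<dots> = (\<Sum>x\<in>UNIV. card ((#) x ` ?A x))"
    by (rule card_UN_disjoint) (use fin in auto)
  finally show ?thesis
    by (simp add: card_image)
qed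

definition cat_count :: "nat \<Rightarrow> nat \<Rightarrow> nat" where
  "cat_count c n = card {s. length s = n \<and> cat_valid c s}"

definition hor_count :: "nat \<Rightarrow> nat \<Rightarrow> nat" where
  "hor_count a n = card {s. length s = n \<and> hor_valid a s}"

lemma cat_count_0: "cat_count c 0 = (if c = 0 then 1 else 0)"
proof -
  have "{s. length s = 0 \<and> cat_valid c s} = (if c = 0 then {[]} else {})"
    by auto
  then show ?thesis
    by (simp add: cat_count_def)
qed

lemma hor_count_0: "hor_count a 0 = (if a = 0 then 1 else 0)"
proof -
  have "{s. length s = 0 \<and> hor_valid a s} = (if a = 0 then {[]} else {})"
    by auto
  then show ?thesis
    by (simp add: hor_count_def)
qed

lemma cat_count_Suc:
  "cat_count c (Suc n) = cat_count (Suc c) n + (if 0 < c then cat_count (c - 1) n else 0)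
     + (if 1 < c then cat_count 0 n else 0)"
  by (simp add: cat_count_def card_lists_length_Suc[where P = "cat_valid c"] UNIV_step)

lemma hor_count_Suc:
  "hor_count a (Suc n) = hor_count (Suc a) n + (if 0 < a then hor_count (a - 1) n else 0)
     + (if a = 1 then hor_count 1 n else 0)"
  by (simp add: hor_count_def card_lists_length_Suc[where P = "hor_valid a"] UNIV_step)

lemma sum_hor_count_Suc:
  "(\<Sum>a=1..Suc m. hor_count a (Suc n))
    = (\<Sum>a=1..Suc (Suc m). hor_count a n) + hor_count 0 n + (\<Sum>a=1..m. hor_count a n)"
  by (induction m) (simp_all add: hor_count_Suc)

lemma cat_count_eq_sum_hor_count:
  "cat_count c n = (if c = 0 then hor_count 0 n else \<Sum>a=1..c. hor_count a n)"
proof (induction n arbitrary: c)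
  case 0
  show ?case
    by (simp add: cat_count_0 hor_count_0)
next
  case (Suc n)
  show ?case
  proof (cases c)
    case 0
    then show ?thesis
      by (simp add: cat_count_Suc hor_count_Suc Suc.IH)
  next
    case (Suc m)
    have "cat_count c (Suc n)
        = (\<Sum>a=1..Suc (Suc m). hor_count a n) + hor_count 0 n + (\<Sum>a=1..m. hor_count a n)"
      using Suc by (cases m) (simp_all add: cat_count_Suc Suc.IH)
    also have "\<dots> = (\<Sum>a=1..c. hor_count a (Suc n))"
      using Suc by (simp only: sum_hor_count_Suc)
    finally show ?thesis
      using Suc by simp
  qed
qed

theorem theorem3p1:
  fixes n :: nat
  shows "e n = h n"
  using cat_count_eq_sum_hor_count[of 0 n]
  by (simp add: e_def h_def dyck_cat_paths_def hor1_dyck_paths_def cat_count_def hor_count_def)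

end
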